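(* Let $S$ and $T$ be left inverse semi-braces, $\sigma:T\to\mathrm{Aut}(S)$ a homomorphism from $(T,\cdot)$ into the automorphism group of the left inverse semi-brace $S$ (write ${}^ua=\sigma(u)(a)$), and $\delta:S\to\mathrm{End}(T)$ an anti-homomorphism from $(S,+)$ into the endomorphism semigroup of $(T,+)$ (write $u^a=\delta(a)(u)$). Suppose that $$(uv)^{\lambda_a({}^ub)}+u\left((u^{-1})^b+w\right)=u\left(v^b+w\right)$$ for all $a,b\in S$ and $u,v,w\in T$. Then $S\times T$ with $$(a,u)+(b,v)=(a+b,\,u^b+v),\qquad (a,u)(b,v)=(a\,{}^ub,\,uv)$$ for all $(a,u),(b,v)\in S\times T$ is a left inverse semi-brace (the double semidirect product of $S$ and $T$ via $\sigma$ and $\delta$).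
   Context: An inverse semigroup is a semigroup $(S,\cdot)$ in which for each $a$ there is a unique $a^{-1}$ with $aa^{-1}a=a$, $a^{-1}aa^{-1}=a^{-1}$. A left inverse semi-brace is a triple $(S,+,\cdot)$ with $(S,+)$ a semigroup, $(S,\cdot)$ an inverse semigroup and $a(b+c)=ab+a(a^{-1}+c)$ for all $a,b,c$; set $\lambda_a(b)=a(a^{-1}+b)$. An automorphism of the left inverse semi-brace $S$ is a bijection preserving both operations. That $\delta$ is an anti-homomorphism from $(S,+)$ means $\delta(a+b)=\delta(b)\circ\delta(a)$, i.e. $u^{a+b}=(u^a)^b$. *)

theory Defs
  imports Main
begin

text \<open>Structures are carried by whole types: a left inverse semi-brace on type 'a
  is given by its two operations add and mul.\<close>

definition is_semigroup :: "('a \<Rightarrow> 'a \<Rightarrow> 'a) \<Rightarrow> bool" where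
  "is_semigroup f \<longleftrightarrow> (\<forall>a b c. f (f a b) c = f a (f b c))"

definition is_inverse_semigroup :: "('a \<Rightarrow> 'a \<Rightarrow> 'a) \<Rightarrow> bool" where
  "is_inverse_semigroup m \<longleftrightarrow> is_semigroup m \<and>
     (\<forall>a. \<exists>!b. m (m a b) a = a \<and> m (m b a) b = b)"

definition inv_of :: "('a \<Rightarrow> 'a \<Rightarrow> 'a) \<Rightarrow> 'a \<Rightarrow> 'a" where
  "inv_of m a = (THE b. m (m a b) a = a \<and> m (m b a) b = b)"

definition left_inverse_semibrace :: "('a \<Rightarrow> 'a \<Rightarrow> 'a) \<Rightarrow> ('a \<Rightarrow> 'a \<Rightarrow> 'a) \<Rightarrow> bool" where
  "left_inverse_semibrace add mul \<longleftrightarrow> is_semigroup add \<and> is_inverse_semigroup mul \<and>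
     (\<forall>a b c. mul a (add b c) = add (mul a b) (mul a (add (inv_of mul a) c)))"

definition lam :: "('a \<Rightarrow> 'a \<Rightarrow> 'a) \<Rightarrow> ('a \<Rightarrow> 'a \<Rightarrow> 'a) \<Rightarrow> 'a \<Rightarrow> 'a \<Rightarrow> 'a" where
  "lam add mul a b = mul a (add (inv_of mul a) b)"

definition is_sb_automorphism ::
  "('a \<Rightarrow> 'a \<Rightarrow> 'a) \<Rightarrow> ('a \<Rightarrow> 'a \<Rightarrow> 'a) \<Rightarrow> ('a \<Rightarrow> 'a) \<Rightarrow> bool" where
  "is_sb_automorphism add mul f \<longleftrightarrow> bij f \<and>
     (\<forall>a b. f (add a b) = add (f a) (f b)) \<and> (\<forall>a b. f (mul a b) = mul (f a) (f b))"

definition is_endomorphism :: "('a \<Rightarrow> 'a \<Rightarrow> 'a) \<Rightarrow> ('a \<Rightarrow> 'a) \<Rightarrow> bool" where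
  "is_endomorphism add f \<longleftrightarrow> (\<forall>a b. f (add a b) = add (f a) (f b))"

end

theory Submission
  imports Defs
begin

text \<open>The key point for the
  multiplication is that \<open>\<sigma>(u u\<inverse>)\<close> is an idempotent injective map, hence the
  identity; so \<open>\<sigma>(u\<inverse>)\<close> inverts \<open>\<sigma>(u)\<close> and \<open>(a, u)\<inverse> = (\<sigma>(u\<inverse>)(a\<inverse>), u\<inverse>)\<close>.
  With this inverse, the first coordinate of the brace law of \<open>S \<times> T\<close> is the
  brace law of \<open>S\<close> transported by \<open>\<sigma>(u)\<close>, and the second coordinate is exactly
  the compatibility condition.\<close>

definition semidirect_add ::
  "('a \<Rightarrow> 'a \<Rightarrow> 'a) \<Rightarrow> ('b \<Rightarrow> 'b \<Rightarrow> 'b) \<Rightarrow> ('a \<Rightarrow> 'b \<Rightarrow> 'b) \<Rightarrow> 'a \<times> 'b \<Rightarrow> 'a \<times> 'b \<Rightarrow> 'a \<times> 'b"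
  where "semidirect_add addS addT \<delta> = (\<lambda>(a, u) (b, v). (addS a b, addT (\<delta> b u) v))"

definition semidirect_mul ::
  "('a \<Rightarrow> 'a \<Rightarrow> 'a) \<Rightarrow> ('b \<Rightarrow> 'b \<Rightarrow> 'b) \<Rightarrow> ('b \<Rightarrow> 'a \<Rightarrow> 'a) \<Rightarrow> 'a \<times> 'b \<Rightarrow> 'a \<times> 'b \<Rightarrow> 'a \<times> 'b"
  where "semidirect_mul mulS mulT \<sigma> = (\<lambda>(a, u) (b, v). (mulS a (\<sigma> u b), mulT u v))"

lemma semidirect_add_Pair [simp]:
  "semidirect_add addS addT \<delta> (a, u) (b, v) = (addS a b, addT (\<delta> b u) v)"
  by (simp add: semidirect_add_def)

lemma semidirect_mul_Pair [simp]:
  "semidirect_mul mulS mulT \<sigma> (a, u) (b, v) = (mulS a (\<sigma> u b), mulT u v)"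
  by (simp add: semidirect_mul_def)

lemma semigroup_assoc: "is_semigroup f \<Longrightarrow> f (f a b) c = f a (f b c)"
  by (simp add: is_semigroup_def)

lemma inverse_semigroup_is_semigroup: "is_inverse_semigroup m \<Longrightarrow> is_semigroup m"
  by (simp add: is_inverse_semigroup_def)

lemma inverse_semigroup_inv_of:
  assumes "is_inverse_semigroup m"
  shows "m (m a (inv_of m a)) a = a" and "m (m (inv_of m a) a) (inv_of m a) = inv_of m a"
proof -
  from assms have "\<exists>!b. m (m a b) a = a \<and> m (m b a) b = b"
    unfolding is_inverse_semigroup_def by blast
  then have "m (m a (inv_of m a)) a = a \<and> m (m (inv_of m a) a) (inv_of m a) = inv_of m a"
    unfolding inv_of_def by (rule theI')
  then show "m (m a (inv_of m a)) a = a" and "m (m (inv_of m a) a) (inv_of m a) = inv_of m a"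
    by simp_all
qed

lemma inv_of_eqI:
  assumes "is_inverse_semigroup m" "m (m a b) a = a" "m (m b a) b = b"
  shows "inv_of m a = b"
proof -
  from assms(1) have "\<exists>!b. m (m a b) a = a \<and> m (m b a) b = b"
    unfolding is_inverse_semigroup_def by blast
  then show ?thesis
    unfolding inv_of_def by (rule the1_equality) (simp add: assms(2,3))
qed

lemma inj_idempotent_fixpoint:
  assumes "inj f" "f \<circ> f = f"
  shows "f x = x"
proof -
  have "f (f x) = f x" using assms(2) by (metis comp_apply)
  then show ?thesis using assms(1) by (simp add: inj_eq)
qed

lemma action_inv_of_cancel:
  assumes T: "is_inverse_semigroup mulT"
    and inj: "\<And>u. inj (\<sigma> u)"
    and hom: "\<And>u v. \<sigma> (mulT u v) = \<sigma> u \<circ> \<sigma> v"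
  shows "\<sigma> u (\<sigma> (inv_of mulT u) x) = x" and "\<sigma> (inv_of mulT u) (\<sigma> u x) = x"
proof -
  have assoc: "\<And>a b c. mulT (mulT a b) c = mulT a (mulT b c)"
    using T by (simp add: semigroup_assoc inverse_semigroup_is_semigroup)
  let ?u' = "inv_of mulT u"
  have "mulT (mulT u ?u') (mulT u ?u') = mulT u ?u'"
    by (metis assoc inverse_semigroup_inv_of(1)[OF T])
  then have "\<sigma> (mulT u ?u') \<circ> \<sigma> (mulT u ?u') = \<sigma> (mulT u ?u')"
    by (simp flip: hom)
  from inj_idempotent_fixpoint[OF inj this] show "\<sigma> u (\<sigma> ?u' x) = x"
    by (simp add: hom)
  have "mulT (mulT ?u' u) (mulT ?u' u) = mulT ?u' u"
    by (metis assoc inverse_semigroup_inv_of(2)[OF T])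
  then have "\<sigma> (mulT ?u' u) \<circ> \<sigma> (mulT ?u' u) = \<sigma> (mulT ?u' u)"
    by (simp flip: hom)
  from inj_idempotent_fixpoint[OF inj this] show "\<sigma> ?u' (\<sigma> u x) = x"
    by (simp add: hom)
qed

lemma semigroup_semidirect_add:
  assumes "is_semigroup addS" "is_semigroup addT"
    and "\<And>a. is_endomorphism addT (\<delta> a)"
    and "\<And>a b. \<delta> (addS a b) = \<delta> b \<circ> \<delta> a"
  shows "is_semigroup (semidirect_add addS addT \<delta>)"
  using assms
  by (simp add: is_semigroup_def is_endomorphism_def split_paired_all)

lemma semigroup_semidirect_mul:
  assumes "is_semigroup mulS" "is_semigroup mulT"
    and "\<And>u a b. \<sigma> u (mulS a b) = mulS (\<sigma> u a) (\<sigma> u b)"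
    and "\<And>u v. \<sigma> (mulT u v) = \<sigma> u \<circ> \<sigma> v"
  shows "is_semigroup (semidirect_mul mulS mulT \<sigma>)"
  using assms
  by (simp add: is_semigroup_def split_paired_all)

context
  fixes mulS :: "'a \<Rightarrow> 'a \<Rightarrow> 'a" and mulT :: "'b \<Rightarrow> 'b \<Rightarrow> 'b" and \<sigma> :: "'b \<Rightarrow> 'a \<Rightarrow> 'a"
  assumes S: "is_inverse_semigroup mulS"
    and T: "is_inverse_semigroup mulT"
    and \<sigma>_inj: "\<And>u. inj (\<sigma> u)"
    and \<sigma>_mul: "\<And>u a b. \<sigma> u (mulS a b) = mulS (\<sigma> u a) (\<sigma> u b)"
    and \<sigma>_hom: "\<And>u v. \<sigma> (mulT u v) = \<sigma> u \<circ> \<sigma> v"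
begin

private abbreviation (input) M where "M \<equiv> semidirect_mul mulS mulT \<sigma>"

lemma semidirect_mul_inverse_pair_iff:
  "M (M (a, u) (x, y)) (a, u) = (a, u) \<and> M (M (x, y) (a, u)) (x, y) = (x, y)
   \<longleftrightarrow> (x, y) = (\<sigma> (inv_of mulT u) (inv_of mulS a), inv_of mulT u)"
proof
  assume "M (M (a, u) (x, y)) (a, u) = (a, u) \<and> M (M (x, y) (a, u)) (x, y) = (x, y)"
  then have a: "mulS (mulS a (\<sigma> u x)) (\<sigma> (mulT u y) a) = a" "mulT (mulT u y) u = u"
    and x: "mulS (mulS x (\<sigma> y a)) (\<sigma> (mulT y u) x) = x" "mulT (mulT y u) y = y"
    by auto
  have y: "y = inv_of mulT u"
    using inv_of_eqI[OF T a(2) x(2)] by simp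
  have "mulS (mulS a (\<sigma> u x)) a = a"
    using a(1) by (simp add: y \<sigma>_hom action_inv_of_cancel[OF T \<sigma>_inj \<sigma>_hom])
  moreover have "mulS (mulS (\<sigma> u x) a) (\<sigma> u x) = \<sigma> u x"
    using arg_cong[OF x(1), of "\<sigma> u"]
    by (simp add: y \<sigma>_hom \<sigma>_mul action_inv_of_cancel[OF T \<sigma>_inj \<sigma>_hom])
  ultimately have "inv_of mulS a = \<sigma> u x"
    by (rule inv_of_eqI[OF S])
  then show "(x, y) = (\<sigma> (inv_of mulT u) (inv_of mulS a), inv_of mulT u)"
    by (simp add: y action_inv_of_cancel[OF T \<sigma>_inj \<sigma>_hom])
next
  assume "(x, y) = (\<sigma> (inv_of mulT u) (inv_of mulS a), inv_of mulT u)"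
  then show "M (M (a, u) (x, y)) (a, u) = (a, u) \<and> M (M (x, y) (a, u)) (x, y) = (x, y)"
    by (simp add: \<sigma>_hom flip: \<sigma>_mul)
      (simp add: action_inv_of_cancel[OF T \<sigma>_inj \<sigma>_hom] inverse_semigroup_inv_of[OF S]
        inverse_semigroup_inv_of[OF T])
qed

lemma inverse_semigroup_semidirect_mul: "is_inverse_semigroup M"
  unfolding is_inverse_semigroup_def
proof (intro conjI allI)
  show "is_semigroup M"
    using S T \<sigma>_mul \<sigma>_hom
    by (simp add: semigroup_semidirect_mul inverse_semigroup_is_semigroup)
  fix p :: "'a \<times> 'b"
  obtain a u where p: "p = (a, u)"
    by (cases p)
  have "M (M p q) p = p \<and> M (M q p) q = q
    \<longleftrightarrow> q = (\<sigma> (inv_of mulT u) (inv_of mulS a), inv_of mulT u)" for q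
    using semidirect_mul_inverse_pair_iff[of a u "fst q" "snd q"] by (simp add: p)
  then show "\<exists>!q. M (M p q) p = p \<and> M (M q p) q = q"
    by (simp only: Ex1_def) blast
qed

lemma inv_of_semidirect_mul:
  "inv_of M (a, u) = (\<sigma> (inv_of mulT u) (inv_of mulS a), inv_of mulT u)"
  using inv_of_eqI[OF inverse_semigroup_semidirect_mul] semidirect_mul_inverse_pair_iff
  by blast

lemma semidirect_brace_law:
  assumes S_brace: "\<And>a b c. mulS a (addS b c) = addS (mulS a b) (lam addS mulS a c)"
    and \<sigma>_add: "\<And>u a b. \<sigma> u (addS a b) = addS (\<sigma> u a) (\<sigma> u b)"
    and compat: "\<And>a b u v w.
       addT (\<delta> (lam addS mulS a (\<sigma> u b)) (mulT u v))
            (mulT u (addT (\<delta> b (inv_of mulT u)) w))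
       = mulT u (addT (\<delta> b v) w)"
  shows "M p (semidirect_add addS addT \<delta> q r)
    = semidirect_add addS addT \<delta> (M p q) (M p (semidirect_add addS addT \<delta> (inv_of M p) r))"
proof -
  obtain a u b v c w where "p = (a, u)" "q = (b, v)" "r = (c, w)"
    by (metis prod.exhaust)
  moreover have "\<sigma> u (addS (\<sigma> (inv_of mulT u) (inv_of mulS a)) c) = addS (inv_of mulS a) (\<sigma> u c)"
    by (simp add: \<sigma>_add action_inv_of_cancel[OF T \<sigma>_inj \<sigma>_hom])
  ultimately show ?thesis
    by (simp add: inv_of_semidirect_mul \<sigma>_add S_brace compat lam_def[symmetric])
qed

end

theorem theorem38:
  fixes addS mulS :: "'a \<Rightarrow> 'a \<Rightarrow> 'a"
    and addT mulT :: "'b \<Rightarrow> 'b \<Rightarrow> 'b"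
    and \<sigma> :: "'b \<Rightarrow> 'a \<Rightarrow> 'a"
    and \<delta> :: "'a \<Rightarrow> 'b \<Rightarrow> 'b"
  assumes S: "left_inverse_semibrace addS mulS"
    and T: "left_inverse_semibrace addT mulT"
    and \<sigma>_aut: "\<forall>u. is_sb_automorphism addS mulS (\<sigma> u)"
    and \<sigma>_hom: "\<forall>u v. \<sigma> (mulT u v) = \<sigma> u \<circ> \<sigma> v"
    and \<delta>_end: "\<forall>a. is_endomorphism addT (\<delta> a)"
    and \<delta>_anti: "\<forall>a b. \<delta> (addS a b) = \<delta> b \<circ> \<delta> a"
    and compat: "\<forall>a b u v w.
       addT (\<delta> (lam addS mulS a (\<sigma> u b)) (mulT u v))
            (mulT u (addT (\<delta> b (inv_of mulT u)) w))
       = mulT u (addT (\<delta> b v) w)"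
  shows "left_inverse_semibrace
           (\<lambda>(a, u) (b, v). (addS a b, addT (\<delta> b u) v))
           (\<lambda>(a, u) (b, v). (mulS a (\<sigma> u b), mulT u v))"
proof -
  note S' = S[unfolded left_inverse_semibrace_def lam_def[symmetric]]
  note T' = T[unfolded left_inverse_semibrace_def]
  have \<sigma>: "\<And>u. inj (\<sigma> u)" "\<And>u a b. \<sigma> u (addS a b) = addS (\<sigma> u a) (\<sigma> u b)"
    "\<And>u a b. \<sigma> u (mulS a b) = mulS (\<sigma> u a) (\<sigma> u b)"
    using \<sigma>_aut by (simp_all add: is_sb_automorphism_def bij_is_inj)
  have "is_semigroup (semidirect_add addS addT \<delta>)"
    using S' T' \<delta>_end \<delta>_anti by (simp add: semigroup_semidirect_add)
  moreover have "is_inverse_semigroup (semidirect_mul mulS mulT \<sigma>)"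
    using S' T' \<sigma> \<sigma>_hom by (simp add: inverse_semigroup_semidirect_mul)
  moreover note semidirect_brace_law[of mulS mulT \<sigma> addS addT \<delta>]
  ultimately show ?thesis
    unfolding left_inverse_semibrace_def semidirect_add_def[symmetric]
      semidirect_mul_def[symmetric]
    using S' T' \<sigma> \<sigma>_hom compat by blast
qed

end
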